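(* Under the standing setup below, for each $i\in\{1,2\}$, every connected component of the graph obtained from $G_i$ by deleting all vertices of $p_i$ is adjacent to exactly two vertices of $p_i$.
   Context: A biconnected graph is series-parallel if it contains no subdivision of $K_4$. A separation pair of a biconnected graph $G$ is a pair $(s,t)$ with $G-s-t$ disconnected; a transitive edge is an edge joining the two vertices of a separation pair. A component w.r.t. $(s,t)$ is the subgraph induced by $s$, $t$ and the vertex set of one connected component of $G-s-t$; vertices other than $s,t$ are internal. A component is heavy if it has an internal vertex adjacent to neither $s$ nor $t$. Standing setup: $G$ is a biconnected series-parallel graph without transitive edges such that every separation pair has at most two heavy components, and $G$ has at least one separation pair. $(s,t)$ is a separation pair of $G$ whose number $k$ of heavy components is maximum over all separation pairs. $G_1$ and $G_2$ are two distinct components w.r.t. $(s,t)$, chosen so that $G_1$ is heavy if $k\ge 1$ and $G_2$ is heavy if $k=2$. For $i\in\{1,2\}$, $p_i$ is a longest $s$–$t$ path in $G_i$. *)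

theory Defs
  imports Main
begin

definition graph :: "'a set \<Rightarrow> 'a set set \<Rightarrow> bool" where
  "graph V E \<longleftrightarrow> finite V \<and> (\<forall>e\<in>E. e \<subseteq> V \<and> card e = 2)"

definition is_path :: "'a set set \<Rightarrow> 'a list \<Rightarrow> bool" where
  "is_path E xs \<longleftrightarrow> xs \<noteq> [] \<and> distinct xs \<and>
     (\<forall>i. Suc i < length xs \<longrightarrow> {xs ! i, xs ! Suc i} \<in> E)"

definition path_in :: "'a set set \<Rightarrow> 'a set \<Rightarrow> 'a list \<Rightarrow> bool" where
  "path_in E W xs \<longleftrightarrow> is_path E xs \<and> set xs \<subseteq> W"

definition reach_in :: "'a set set \<Rightarrow> 'a set \<Rightarrow> 'a \<Rightarrow> 'a \<Rightarrow> bool" where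
  "reach_in E W x y \<longleftrightarrow> (\<exists>xs. path_in E W xs \<and> hd xs = x \<and> last xs = y)"

definition connected_on :: "'a set set \<Rightarrow> 'a set \<Rightarrow> bool" where
  "connected_on E W \<longleftrightarrow> W \<noteq> {} \<and> (\<forall>x\<in>W. \<forall>y\<in>W. reach_in E W x y)"

definition conn_comp :: "'a set set \<Rightarrow> 'a set \<Rightarrow> 'a set \<Rightarrow> bool" where
  "conn_comp E W C \<longleftrightarrow> (\<exists>x\<in>W. C = {y\<in>W. reach_in E W x y})"

definition biconnected :: "'a set \<Rightarrow> 'a set set \<Rightarrow> bool" where
  "biconnected V E \<longleftrightarrow> card V \<ge> 3 \<and> connected_on E V \<and>
     (\<forall>v\<in>V. connected_on E (V - {v}))"

definition has_K4_subdivision :: "'a set \<Rightarrow> 'a set set \<Rightarrow> bool" where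
  "has_K4_subdivision V E \<longleftrightarrow>
     (\<exists>(f :: nat \<Rightarrow> 'a) (P :: nat \<Rightarrow> nat \<Rightarrow> 'a list).
        inj_on f {..<4} \<and> f ` {..<4} \<subseteq> V \<and>
        (\<forall>i j. i < j \<and> j < 4 \<longrightarrow>
            path_in E V (P i j) \<and> hd (P i j) = f i \<and> last (P i j) = f j \<and>
            set (P i j) \<inter> f ` {..<4} = {f i, f j}) \<and>
        (\<forall>i j i' j'. i < j \<and> j < 4 \<and> i' < j' \<and> j' < 4 \<and> (i, j) \<noteq> (i', j') \<longrightarrow>
            set (P i j) \<inter> set (P i' j') \<subseteq> f ` {..<4}))"

definition series_parallel :: "'a set \<Rightarrow> 'a set set \<Rightarrow> bool" where
  "series_parallel V E \<longleftrightarrow> biconnected V E \<and> \<not> has_K4_subdivision V E"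

definition sep_pair :: "'a set \<Rightarrow> 'a set set \<Rightarrow> 'a \<Rightarrow> 'a \<Rightarrow> bool" where
  "sep_pair V E s t \<longleftrightarrow> s \<in> V \<and> t \<in> V \<and> s \<noteq> t \<and>
     (\<exists>x\<in>V - {s, t}. \<exists>y\<in>V - {s, t}. \<not> reach_in E (V - {s, t}) x y)"

definition no_transitive_edges :: "'a set \<Rightarrow> 'a set set \<Rightarrow> bool" where
  "no_transitive_edges V E \<longleftrightarrow> (\<forall>s t. sep_pair V E s t \<longrightarrow> {s, t} \<notin> E)"

text \<open>Components w.r.t. (s,t) are represented by their sets C of internal vertices
  (a connected component of G - s - t); the component itself is the subgraph
  induced by C \<union> {s,t}.\<close>
definition comp_wrt :: "'a set \<Rightarrow> 'a set set \<Rightarrow> 'a \<Rightarrow> 'a \<Rightarrow> 'a set \<Rightarrow> bool" where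
  "comp_wrt V E s t C \<longleftrightarrow> conn_comp E (V - {s, t}) C"

definition heavy :: "'a set set \<Rightarrow> 'a \<Rightarrow> 'a \<Rightarrow> 'a set \<Rightarrow> bool" where
  "heavy E s t C \<longleftrightarrow> (\<exists>v\<in>C. {v, s} \<notin> E \<and> {v, t} \<notin> E)"

definition num_heavy :: "'a set \<Rightarrow> 'a set set \<Rightarrow> 'a \<Rightarrow> 'a \<Rightarrow> nat" where
  "num_heavy V E s t = card {C. comp_wrt V E s t C \<and> heavy E s t C}"

definition longest_st_path :: "'a set set \<Rightarrow> 'a \<Rightarrow> 'a \<Rightarrow> 'a set \<Rightarrow> 'a list \<Rightarrow> bool" where
  "longest_st_path E s t C p \<longleftrightarrow>
     path_in E (C \<union> {s, t}) p \<and> hd p = s \<and> last p = t \<and>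
     (\<forall>q. path_in E (C \<union> {s, t}) q \<and> hd q = s \<and> last q = t \<longrightarrow> length q \<le> length p)"

definition comps_attach_twice :: "'a set set \<Rightarrow> 'a \<Rightarrow> 'a \<Rightarrow> 'a set \<Rightarrow> 'a list \<Rightarrow> bool" where
  "comps_attach_twice E s t C p \<longleftrightarrow>
     (\<forall>D. conn_comp E ((C \<union> {s, t}) - set p) D \<longrightarrow>
        card {x \<in> set p. \<exists>y\<in>D. {x, y} \<in> E} = 2)"

end

theory Submission
  imports Defs
begin

(* Let D be a component of G_C - V(p). Since G is 2-connected, no single vertex of p
   separates D from the rest of p, so D is adjacent to at least two vertices of p.
   A second component C' of G - s - t contains an s-t path closing p to a cycle that
   avoids D. If D were adjacent to three vertices a, b, c of this cycle, a tripod in D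
   joining one centre to a, b and c would, together with the cycle, form a subdivision
   of K4. *)

abbreviation walk :: "'a set set \<Rightarrow> 'a list \<Rightarrow> bool" where
  "walk E \<equiv> successively (\<lambda>x y. {x, y} \<in> E)"

lemma walk_rev: "walk E (rev xs) \<longleftrightarrow> walk E xs"
  by (simp add: insert_commute)

lemma walk_infix: "walk E (xs @ ys @ zs) \<Longrightarrow> walk E ys"
  by (simp add: successively_append_iff)

lemma walk_append: "walk E xs \<Longrightarrow> walk E ys \<Longrightarrow> {last xs, hd ys} \<in> E \<Longrightarrow> walk E (xs @ ys)"
  by (cases "xs = [] \<or> ys = []") (auto simp: successively_append_iff)

lemma path_in_iff: "path_in E W xs \<longleftrightarrow> xs \<noteq> [] \<and> distinct xs \<and> walk E xs \<and> set xs \<subseteq> W"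
  unfolding path_in_def is_path_def successively_conv_nth by blast

lemma path_in_append:
  assumes "path_in E W (xs @ ys)"
  shows "xs \<noteq> [] \<Longrightarrow> path_in E W xs" and "ys \<noteq> [] \<Longrightarrow> path_in E W ys"
  using assms by (auto simp: path_in_iff successively_append_iff)

definition adj_in :: "'a set set \<Rightarrow> 'a set \<Rightarrow> 'a \<Rightarrow> 'a \<Rightarrow> bool" where
  "adj_in E W u v \<longleftrightarrow> {u, v} \<in> E \<and> u \<in> W \<and> v \<in> W"

lemma symp_adj_in: "symp (adj_in E W)"
  unfolding symp_def adj_in_def by (simp add: insert_commute)

lemma rtranclp_adj_in_mem: "(adj_in E W)\<^sup>*\<^sup>* x y \<Longrightarrow> x \<in> W \<Longrightarrow> y \<in> W"
  by (induction rule: rtranclp_induct) (auto simp: adj_in_def)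

lemma rtranclp_adj_in_leaves:
  "(adj_in E W)\<^sup>*\<^sup>* x y \<Longrightarrow> x \<in> A \<Longrightarrow> y \<notin> A \<Longrightarrow> \<exists>u\<in>A. \<exists>v\<in>W - A. {u, v} \<in> E"
  by (induction rule: rtranclp_induct) (auto simp: adj_in_def)

lemma path_in_rtranclp: "path_in E W xs \<Longrightarrow> y \<in> set xs \<Longrightarrow> (adj_in E W)\<^sup>*\<^sup>* (hd xs) y"
proof (induction xs)
  case Nil
  then show ?case by simp
next
  case (Cons x xs)
  show ?case
  proof (cases "y = x")
    case True
    then show ?thesis by simp
  next
    case False
    then have "path_in E W xs" "adj_in E W x (hd xs)" "y \<in> set xs"
      using Cons.prems by (cases xs; auto simp: path_in_iff adj_in_def)+
    then show ?thesis
      using Cons.IH by (auto intro: converse_rtranclp_into_rtranclp)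
  qed
qed

lemma rtranclp_reach_in: "(adj_in E W)\<^sup>*\<^sup>* x y \<Longrightarrow> x \<in> W \<Longrightarrow> reach_in E W x y"
proof (induction rule: rtranclp_induct)
  case base
  show ?case
    unfolding reach_in_def using base by (intro exI[of _ "[x]"]) (simp add: path_in_iff)
next
  case (step y z)
  then obtain xs where xs: "path_in E W xs" "hd xs = x" "last xs = y"
    unfolding reach_in_def by blast
  show ?case
  proof (cases "z \<in> set xs")
    case True
    \<comment> \<open>the walk revisits z: cut the path short there\<close>
    then obtain us vs where xs_split: "xs = us @ z # vs"
      by (meson split_list)
    then have "path_in E W (us @ [z]) \<and> hd (us @ [z]) = x"
      using xs path_in_append(1)[of E W "us @ [z]" vs] by (cases us) auto
    then show ?thesis
      unfolding reach_in_def by (intro exI[of _ "us @ [z]"]) simp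
  next
    case False
    then have "path_in E W (xs @ [z]) \<and> hd (xs @ [z]) = x"
      using xs step.hyps(2) by (auto simp: path_in_iff successively_append_iff adj_in_def)
    then show ?thesis
      unfolding reach_in_def using xs(3) by (intro exI[of _ "xs @ [z]"]) simp
  qed
qed

lemma reach_in_iff_rtranclp: "reach_in E W x y \<longleftrightarrow> x \<in> W \<and> (adj_in E W)\<^sup>*\<^sup>* x y"
proof
  assume "reach_in E W x y"
  then obtain xs where xs: "path_in E W xs" "hd xs = x" "last xs = y"
    unfolding reach_in_def by blast
  then have "xs \<noteq> []" "set xs \<subseteq> W"
    by (simp_all add: path_in_iff)
  then show "x \<in> W \<and> (adj_in E W)\<^sup>*\<^sup>* x y"
    using xs path_in_rtranclp[OF xs(1) last_in_set] hd_in_set by fastforce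
next
  assume "x \<in> W \<and> (adj_in E W)\<^sup>*\<^sup>* x y"
  then show "reach_in E W x y"
    using rtranclp_reach_in by fast
qed

lemma conn_comp_iff_rtranclp: "conn_comp E W D \<longleftrightarrow> (\<exists>x\<in>W. D = {y. (adj_in E W)\<^sup>*\<^sup>* x y})"
  unfolding conn_comp_def reach_in_iff_rtranclp by (auto dest: rtranclp_adj_in_mem)

lemma conn_comp_subset: "conn_comp E W D \<Longrightarrow> D \<subseteq> W"
  unfolding conn_comp_def by auto

lemma conn_comp_nonempty: "conn_comp E W D \<Longrightarrow> D \<noteq> {}"
  unfolding conn_comp_iff_rtranclp by auto

lemma conn_comp_rtranclp: "conn_comp E W D \<Longrightarrow> u \<in> D \<Longrightarrow> v \<in> D \<Longrightarrow> (adj_in E W)\<^sup>*\<^sup>* u v"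
  unfolding conn_comp_iff_rtranclp
  by (metis mem_Collect_eq rtranclp_trans sympD symp_rtranclp symp_adj_in)

lemma conn_comp_closed:
  assumes "conn_comp E W D" "u \<in> D" "v \<in> W" "{u, v} \<in> E"
  shows "v \<in> D"
proof -
  obtain x where D: "D = {y. (adj_in E W)\<^sup>*\<^sup>* x y}"
    using assms(1) unfolding conn_comp_iff_rtranclp by blast
  have "adj_in E W u v"
    using assms conn_comp_subset[OF assms(1)] by (auto simp: adj_in_def)
  then show ?thesis
    using assms(2) unfolding D by (auto intro: rtranclp.rtrancl_into_rtrancl)
qed

lemma conn_comp_disjoint:
  assumes "conn_comp E W D1" "conn_comp E W D2" "D1 \<noteq> D2"
  shows "D1 \<inter> D2 = {}"
proof (rule ccontr)
  assume "D1 \<inter> D2 \<noteq> {}"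
  then obtain v where "v \<in> D1" "v \<in> D2" by blast
  then have "u \<in> D2" if "u \<in> D1" for u
    using assms(1,2) that conn_comp_rtranclp[OF assms(1) \<open>v \<in> D1\<close> that]
    unfolding conn_comp_iff_rtranclp by (auto intro: rtranclp_trans)
  moreover have "u \<in> D1" if "u \<in> D2" for u
    using assms(1,2) that conn_comp_rtranclp[OF assms(2) \<open>v \<in> D2\<close> that] \<open>v \<in> D1\<close>
    unfolding conn_comp_iff_rtranclp by (auto intro: rtranclp_trans)
  ultimately show False
    using assms(3) by blast
qed

lemma rtranclp_adj_in_conn_comp:
  "(adj_in E W)\<^sup>*\<^sup>* u v \<Longrightarrow> conn_comp E W D \<Longrightarrow> u \<in> D \<Longrightarrow> (adj_in E D)\<^sup>*\<^sup>* u v"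
proof (induction rule: rtranclp_induct)
  case (step y z)
  then have "y \<in> D"
    using rtranclp_adj_in_mem by metis
  then have "adj_in E D y z"
    using step conn_comp_closed[OF step.prems(1)] by (auto simp: adj_in_def)
  then show ?case
    using step by (meson rtranclp.rtrancl_into_rtrancl)
qed simp

lemma conn_comp_reach_in:
  assumes "conn_comp E W D" "u \<in> D" "v \<in> D"
  shows "reach_in E D u v"
  using rtranclp_adj_in_conn_comp[OF conn_comp_rtranclp[OF assms] assms(1,2)] assms(2)
  unfolding reach_in_iff_rtranclp by blast

lemma biconnected_edge_leaving:
  assumes "biconnected V E" "x \<in> V" "D \<subseteq> V - {x}" "d \<in> D" "w \<in> V - {x} - D"
  obtains u v where "u \<in> D" "v \<in> V - {x} - D" "{u, v} \<in> E"
proof -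
  have "connected_on E (V - {x})"
    using assms(1,2) unfolding biconnected_def by blast
  then have "reach_in E (V - {x}) d w"
    using assms(3-5) unfolding connected_on_def by blast
  then show ?thesis
    using rtranclp_adj_in_leaves[of E "V - {x}" d w D] assms(4,5) that
    by (auto simp: reach_in_iff_rtranclp)
qed

lemma comp_wrt_sym: "comp_wrt V E s t C \<longleftrightarrow> comp_wrt V E t s C"
  by (simp add: comp_wrt_def insert_commute)

lemma comp_wrt_adjacent:
  assumes "biconnected V E" "s \<in> V" "t \<in> V" "s \<noteq> t" "comp_wrt V E s t C"
  obtains u where "u \<in> C" "{s, u} \<in> E"
proof -
  have C: "conn_comp E (V - {s, t}) C"
    using assms(5) unfolding comp_wrt_def .
  obtain d where "d \<in> C"
    using conn_comp_nonempty[OF C] by blast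
  moreover have "C \<subseteq> V - {t}" "s \<in> V - {t} - C"
    using conn_comp_subset[OF C] assms(2,4) by auto
  ultimately obtain u v where uv: "u \<in> C" "v \<in> V - {t} - C" "{u, v} \<in> E"
    using biconnected_edge_leaving[OF assms(1,3)] by metis
  then have "v = s"
    using conn_comp_closed[OF C] by blast
  then show ?thesis
    using uv that by (simp add: insert_commute)
qed

lemma three_in_order:
  assumes "A \<subseteq> set xs" "3 \<le> card A"
  obtains L1 a L2 b L3 c L4 where "xs = L1 @ a # L2 @ b # L3 @ c # L4" "a \<in> A" "b \<in> A" "c \<in> A"
proof -
  have "set (filter (\<lambda>x. x \<in> A) xs) = A"
    using assms(1) by auto
  then have "3 \<le> length (filter (\<lambda>x. x \<in> A) xs)"
    using assms(2) card_length[of "filter (\<lambda>x. x \<in> A) xs"] by simp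
  then obtain a b c rest where "filter (\<lambda>x. x \<in> A) xs = a # b # c # rest"
    by (auto simp: numeral_3_eq_3 Suc_le_length_iff)
  then obtain L1 X1 where "xs = L1 @ a # X1" "a \<in> A" "filter (\<lambda>x. x \<in> A) X1 = b # c # rest"
    by (auto dest: filter_eq_ConsD)
  moreover from this(3) obtain L2 X2 where "X1 = L2 @ b # X2" "b \<in> A" "filter (\<lambda>x. x \<in> A) X2 = c # rest"
    by (auto dest: filter_eq_ConsD)
  moreover from this(3) obtain L3 L4 where "X2 = L3 @ c # L4" "c \<in> A"
    by (auto dest: filter_eq_ConsD)
  ultimately show ?thesis
    using that by blast
qed

lemma conn_comp_tripod:
  assumes D: "conn_comp E W D" and "da \<in> D" "db \<in> D" "dc \<in> D"
  obtains z Xa Xb Xc where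
    "distinct (z # Xa @ Xb @ Xc)" "set (z # Xa @ Xb @ Xc) \<subseteq> D"
    "walk E (z # Xa)" "walk E (z # Xb)" "walk E (z # Xc)"
    "last (z # Xa) = da" "last (z # Xb) = db" "last (z # Xc) = dc"
proof -
  obtain R where R: "path_in E D R" "hd R = da" "last R = db"
    using conn_comp_reach_in[OF D \<open>da \<in> D\<close> \<open>db \<in> D\<close>] unfolding reach_in_def by blast
  obtain S0 where S0: "path_in E D S0" "hd S0 = dc" "last S0 = da"
    using conn_comp_reach_in[OF D \<open>dc \<in> D\<close> \<open>da \<in> D\<close>] unfolding reach_in_def by blast
  \<comment> \<open>the centre z is the first vertex of the dc-da path on the da-db path\<close>
  have "\<exists>x\<in>set S0. x \<in> set R"
    using R S0 by (metis hd_in_set last_in_set path_in_iff)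
  then obtain S z S2 where S: "S0 = S @ z # S2" "z \<in> set R" "\<forall>y\<in>set S. y \<notin> set R"
    by (rule split_list_first_propE)
  obtain R1 R2 where R_split: "R = R1 @ z # R2"
    using split_list[OF S(2)] by blast
  have R1: "path_in E D (R1 @ [z])" and R2: "path_in E D (z # R2)"
    using R(1) path_in_append[of E D "R1 @ [z]" R2] path_in_append[of E D R1 "z # R2"]
    unfolding R_split by simp_all
  have S_path: "path_in E D (S @ [z])"
    using S0(1) path_in_append[of E D "S @ [z]" S2] unfolding S(1) by simp
  show ?thesis
  proof
    show "distinct (z # rev R1 @ R2 @ rev S)" "set (z # rev R1 @ R2 @ rev S) \<subseteq> D"
      using R(1) S_path S(3) unfolding R_split by (auto simp: path_in_iff)
    show "walk E (z # rev R1)" "walk E (z # R2)" "walk E (z # rev S)"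
      using walk_rev[of E "R1 @ [z]"] walk_rev[of E "S @ [z]"] R1 R2 S_path
      by (simp_all add: path_in_iff)
    show "last (z # rev R1) = da" "last (z # R2) = db" "last (z # rev S) = dc"
      using R(2,3) S0(2) unfolding R_split S(1) by (cases R1; cases S; simp)+
  qed
qed

lemma has_K4_subdivisionI:
  assumes dist: "distinct (a # b # c # z # Xab @ Xbc @ Xca @ Xza @ Xzb @ Xzc)"
    and sub: "set (a # b # c # z # Xab @ Xbc @ Xca @ Xza @ Xzb @ Xzc) \<subseteq> V"
    and ab: "walk E (a # Xab @ [b])" and bc: "walk E (b # Xbc @ [c])"
    and ca: "walk E (c # Xca @ [a])" and za: "walk E (z # Xza @ [a])"
    and zb: "walk E (z # Xzb @ [b])" and zc: "walk E (z # Xzc @ [c])"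
  shows "has_K4_subdivision V E"
proof -
  define f where "f i = [a, b, c, z] ! i" for i
  define X where "X i j = [[[], Xab, rev Xca, rev Xza], [[], [], Xbc, rev Xzb],
                           [[], [], [], rev Xzc]] ! i ! j" for i j
  define P where "P i j = f i # X i j @ [f j]" for i j
  have pairs: "(i, j) \<in> {(0, 1), (0, 2), (0, 3), (1, 2), (1, 3), (2, 3)}"
    if "i < j" "j < (4::nat)" for i j
    using that by (simp, presburger)
  have four: "{..<4::nat} = {0, 1, 2, 3}" by auto
  have f_image: "f ` {..<4} = {a, b, c, z}" unfolding four f_def by simp
  have walks: "walk E (P i j)" if "i < j" "j < 4" for i j
  proof -
    have "walk E (a # rev Xca @ [c])" "walk E (a # rev Xza @ [z])"
      "walk E (b # rev Xzb @ [z])" "walk E (c # rev Xzc @ [z])"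
      using walk_rev[of E "c # Xca @ [a]"] walk_rev[of E "z # Xza @ [a]"]
        walk_rev[of E "z # Xzb @ [b]"] walk_rev[of E "z # Xzc @ [c]"] ca za zb zc
      by simp_all
    then show ?thesis
      using pairs[OF that] ab bc by (auto simp: P_def X_def f_def)
  qed
  have X_f: "set (X i j) \<inter> {a, b, c, z} = {}" and X_V: "set (X i j) \<subseteq> V"
    and X_distinct: "distinct (f i # X i j @ [f j])" if "i < j" "j < 4" for i j
    using pairs[OF that] dist sub by (auto simp: X_def f_def)
  have X_disjoint: "set (X i j) \<inter> set (X i' j') = {}"
    if "i < j" "j < 4" "i' < j'" "j' < 4" "(i, j) \<noteq> (i', j')" for i j i' j'
    using pairs[OF that(1,2)] pairs[OF that(3,4)] that(5) dist
    by (simp add: X_def) (elim disjE; simp; blast)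
  have "inj_on f {..<4}" unfolding four f_def inj_on_def using dist by auto
  moreover have "path_in E V (P i j) \<and> hd (P i j) = f i \<and> last (P i j) = f j \<and>
      set (P i j) \<inter> f ` {..<4} = {f i, f j}" if "i < j" "j < 4" for i j
    using walks[OF that] X_f[OF that] X_V[OF that] X_distinct[OF that] f_image sub that
    by (auto simp: P_def path_in_iff)
  moreover have "set (P i j) \<inter> set (P i' j') \<subseteq> f ` {..<4}"
    if "i < j" "j < 4" "i' < j'" "j' < 4" "(i, j) \<noteq> (i', j')" for i j i' j'
    using X_disjoint[OF that] f_image that by (auto simp: P_def)
  ultimately show ?thesis
    unfolding has_K4_subdivision_def using f_image sub by (intro exI[of _ f] exI[of _ P]) auto
qed

lemma has_K4_subdivision_if_three_attachments:
  assumes cyc: "distinct cyc" "walk E cyc" "{last cyc, hd cyc} \<in> E" "set cyc \<subseteq> V"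
    and D: "conn_comp E W D" "D \<subseteq> V" "D \<inter> set cyc = {}"
    and three: "3 \<le> card {x \<in> set cyc. \<exists>y\<in>D. {x, y} \<in> E}"
  shows "has_K4_subdivision V E"
proof -
  obtain L1 a L2 b L3 c L4 where cyc_split: "cyc = L1 @ a # L2 @ b # L3 @ c # L4"
    and "a \<in> {x \<in> set cyc. \<exists>y\<in>D. {x, y} \<in> E}" "b \<in> {x \<in> set cyc. \<exists>y\<in>D. {x, y} \<in> E}"
      "c \<in> {x \<in> set cyc. \<exists>y\<in>D. {x, y} \<in> E}"
    using three_in_order[OF _ three] by blast
  then obtain da db dc where "da \<in> D" "db \<in> D" "dc \<in> D"
    and att: "{a, da} \<in> E" "{b, db} \<in> E" "{c, dc} \<in> E"
    by blast
  then obtain z Xa Xb Xc where tripod: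
    "distinct (z # Xa @ Xb @ Xc)" "set (z # Xa @ Xb @ Xc) \<subseteq> D"
    "walk E (z # Xa)" "walk E (z # Xb)" "walk E (z # Xc)"
    "last (z # Xa) = da" "last (z # Xb) = db" "last (z # Xc) = dc"
    using conn_comp_tripod[OF D(1)] by metis
  have closing: "{last (c # L4), hd (L1 @ [a])} \<in> E"
    using cyc(3) unfolding cyc_split by (cases L1) simp_all
  show ?thesis
  proof (rule has_K4_subdivisionI[of a b c z L2 L3 "L4 @ L1" Xa Xb Xc])
    show "distinct (a # b # c # z # L2 @ L3 @ (L4 @ L1) @ Xa @ Xb @ Xc)"
      using cyc(1) tripod(1,2) D(3) unfolding cyc_split by auto
    show "set (a # b # c # z # L2 @ L3 @ (L4 @ L1) @ Xa @ Xb @ Xc) \<subseteq> V"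
      using cyc(4) tripod(2) D(2) unfolding cyc_split by auto
    show "walk E (a # L2 @ [b])" "walk E (b # L3 @ [c])"
      using walk_infix[of E L1 "a # L2 @ [b]" "L3 @ c # L4"]
        walk_infix[of E "L1 @ a # L2" "b # L3 @ [c]" L4] cyc(2)
      unfolding cyc_split by simp_all
    have "walk E (c # L4)" "walk E (L1 @ [a])"
      using walk_infix[of E "L1 @ a # L2 @ b # L3" "c # L4" "[]"]
        walk_infix[of E "[]" "L1 @ [a]" "L2 @ b # L3 @ c # L4"] cyc(2)
      unfolding cyc_split by simp_all
    then show "walk E (c # (L4 @ L1) @ [a])"
      using walk_append[OF _ _ closing] by simp
    show "walk E (z # Xa @ [a])" "walk E (z # Xb @ [b])" "walk E (z # Xc @ [c])"
      using walk_append[of E "z # Xa" "[a]"] walk_append[of E "z # Xb" "[b]"]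
        walk_append[of E "z # Xc" "[c]"] tripod(3-8) att
      by (simp_all add: insert_commute)
  qed
qed

lemma comp_wrt_cycle_through_path:
  assumes bic: "biconnected V E" and st: "s \<in> V" "t \<in> V" "s \<noteq> t"
    and C: "comp_wrt V E s t C" and C': "comp_wrt V E s t C'" "C \<noteq> C'"
    and p: "path_in E (C \<union> {s, t}) p" "hd p = s" "last p = t"
  obtains cyc where "distinct cyc" "walk E cyc" "{last cyc, hd cyc} \<in> E"
    "set p \<subseteq> set cyc" "set cyc \<subseteq> set p \<union> C'"
proof -
  obtain us where us: "us \<in> C'" "{s, us} \<in> E"
    using comp_wrt_adjacent[OF bic st C'(1)] .
  obtain ut where ut: "ut \<in> C'" "{t, ut} \<in> E"
    using comp_wrt_adjacent[OF bic st(2,1) st(3)[symmetric]] C'(1) comp_wrt_sym by metis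
  have C'_comp: "conn_comp E (V - {s, t}) C'"
    using C'(1) unfolding comp_wrt_def .
  obtain Q where Q: "path_in E C' Q" "hd Q = us" "last Q = ut"
    using conn_comp_reach_in[OF C'_comp us(1) ut(1)] unfolding reach_in_def by blast
  have "C \<inter> C' = {}"
    using conn_comp_disjoint C C' unfolding comp_wrt_def by blast
  then have "set p \<inter> set Q = {}"
    using p(1) Q(1) conn_comp_subset[OF C'_comp] by (auto simp: path_in_iff)
  show ?thesis
  proof
    show "distinct (p @ rev Q)" "set p \<subseteq> set (p @ rev Q)" "set (p @ rev Q) \<subseteq> set p \<union> C'"
      using p(1) Q(1) \<open>set p \<inter> set Q = {}\<close> by (auto simp: path_in_iff)
    have "walk E (rev Q)"
      using Q(1) by (simp add: path_in_iff insert_commute)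
    then show "walk E (p @ rev Q)"
      using walk_append[of E p "rev Q"] p Q ut(2) by (simp add: path_in_iff hd_rev)
    show "{last (p @ rev Q), hd (p @ rev Q)} \<in> E"
      using p Q us(2) by (auto simp: path_in_iff last_rev insert_commute)
  qed
qed

lemma comps_attach_twice_if_second_comp:
  assumes G: "graph V E" and bic: "biconnected V E" and no_K4: "\<not> has_K4_subdivision V E"
    and st: "s \<in> V" "t \<in> V" "s \<noteq> t"
    and C: "comp_wrt V E s t C" and C': "comp_wrt V E s t C'" "C \<noteq> C'"
    and p: "path_in E (C \<union> {s, t}) p" "hd p = s" "last p = t"
  shows "comps_attach_twice E s t C p"
  unfolding comps_attach_twice_def
proof (intro allI impI)
  fix D
  assume D: "conn_comp E (C \<union> {s, t} - set p) D"
  define N where "N = {x \<in> set p. \<exists>y\<in>D. {x, y} \<in> E}"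
  have C_comp: "conn_comp E (V - {s, t}) C"
    using C unfolding comp_wrt_def .
  have st_p: "s \<in> set p" "t \<in> set p"
    using p by (auto simp: path_in_iff)
  have D_sub: "D \<subseteq> C" "D \<inter> set p = {}"
    using conn_comp_subset[OF D] st_p by auto
  have p_V: "set p \<subseteq> V"
    using p(1) conn_comp_subset[OF C_comp] st by (auto simp: path_in_iff)
  have D_V: "D \<subseteq> V"
    using D_sub(1) conn_comp_subset[OF C_comp] by blast
  have neighbour_on_p: "v \<in> set p" if "u \<in> D" "{u, v} \<in> E" "v \<notin> D" for u v
  proof -
    have "v \<in> V"
      using G that(2) unfolding graph_def by blast
    then have "v \<in> C \<union> {s, t}"
      using conn_comp_closed[OF C_comp, of u v] that(1,2) D_sub(1) by blast
    then show ?thesis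
      using conn_comp_closed[OF D that(1) _ that(2)] that(3) by blast
  qed
  have not_one: "\<not> N \<subseteq> {x}" if "x \<in> set p" for x
  proof
    assume N_x: "N \<subseteq> {x}"
    obtain w where "w \<in> set p" "w \<noteq> x"
      using st_p st(3) by blast
    then have "x \<in> V" "D \<subseteq> V - {x}" "w \<in> V - {x} - D"
      using that p_V D_V D_sub(2) by auto
    moreover obtain d where "d \<in> D"
      using conn_comp_nonempty[OF D] by blast
    ultimately obtain u v where uv: "u \<in> D" "v \<in> V - {x} - D" "{u, v} \<in> E"
      using biconnected_edge_leaving[OF bic] by metis
    then have "v \<in> N"
      unfolding N_def using neighbour_on_p by (auto simp: insert_commute)
    then show False
      using N_x uv(2) by blast
  qed
  have lower: "2 \<le> card N"
  proof (rule ccontr)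
    assume "\<not> 2 \<le> card N"
    then have "\<forall>x\<in>N. \<forall>y\<in>N. x = y"
      using card_le_Suc0_iff_eq[of N] unfolding N_def by simp
    then show False
      using not_one st_p(1) unfolding N_def by blast
  qed
  have upper: "card N \<le> 2"
  proof (rule ccontr)
    assume "\<not> card N \<le> 2"
    obtain cyc where cyc: "distinct cyc" "walk E cyc" "{last cyc, hd cyc} \<in> E"
      "set p \<subseteq> set cyc" "set cyc \<subseteq> set p \<union> C'"
      using comp_wrt_cycle_through_path[OF bic st C C' p] .
    have "C \<inter> C' = {}"
      using conn_comp_disjoint C C' unfolding comp_wrt_def by blast
    then have "D \<inter> set cyc = {}"
      using cyc(5) D_sub by blast
    moreover have "set cyc \<subseteq> V"
      using cyc(5) p_V C' conn_comp_subset unfolding comp_wrt_def by blast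
    moreover have "card N \<le> card {x \<in> set cyc. \<exists>y\<in>D. {x, y} \<in> E}"
      unfolding N_def using cyc(4) by (intro card_mono) auto
    ultimately have "has_K4_subdivision V E"
      using has_K4_subdivision_if_three_attachments[OF cyc(1-3) _ D D_V] \<open>\<not> card N \<le> 2\<close>
      by simp
    then show False
      using no_K4 by blast
  qed
  show "card {x \<in> set p. \<exists>y\<in>D. {x, y} \<in> E} = 2"
    using lower upper unfolding N_def by simp
qed

theorem claim2:
  fixes V :: "'a set" and E :: "'a set set" and s t :: 'a
    and C1 C2 :: "'a set" and p1 p2 :: "'a list"
  assumes "graph V E"
    and "series_parallel V E"
    and "no_transitive_edges V E"
    and "\<forall>u w. sep_pair V E u w \<longrightarrow> num_heavy V E u w \<le> 2"
    and "\<exists>u w. sep_pair V E u w"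
    and "sep_pair V E s t"
    and "\<forall>u w. sep_pair V E u w \<longrightarrow> num_heavy V E u w \<le> num_heavy V E s t"
    and "comp_wrt V E s t C1" and "comp_wrt V E s t C2" and "C1 \<noteq> C2"
    and "num_heavy V E s t \<ge> 1 \<longrightarrow> heavy E s t C1"
    and "num_heavy V E s t = 2 \<longrightarrow> heavy E s t C2"
    and "longest_st_path E s t C1 p1"
    and "longest_st_path E s t C2 p2"
  shows "comps_attach_twice E s t C1 p1 \<and> comps_attach_twice E s t C2 p2"
proof -
  have bic: "biconnected V E" and no_K4: "\<not> has_K4_subdivision V E"
    using assms(2) unfolding series_parallel_def by blast+
  have st: "s \<in> V" "t \<in> V" "s \<noteq> t"
    using assms(6) unfolding sep_pair_def by blast+
  have "comps_attach_twice E s t C1 p1"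
    using comps_attach_twice_if_second_comp[OF assms(1) bic no_K4 st assms(8,9,10)] assms(13)
    unfolding longest_st_path_def by blast
  moreover have "comps_attach_twice E s t C2 p2"
    using comps_attach_twice_if_second_comp[OF assms(1) bic no_K4 st assms(9,8) assms(10)[symmetric]]
      assms(14)
    unfolding longest_st_path_def by blast
  ultimately show ?thesis ..
qed

end
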